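(* Let $n$ be an odd integer with prime factorisation $n=p_1^{J_1}\cdots p_s^{J_s}$, where $s\ge2$, the $p_i$ are distinct primes, $J_i\ge1$, and $\prod_{i=1}^r p_i^{J_i}<p_{r+1}$ for every $r\in\{1,\dots,s-1\}$. If $\mathcal{D}_1,\mathcal{D}_2$ are sets of positive divisors of $n$ with $\sum_{d\in\mathcal{D}_1}\phi(n/d)=\sum_{d\in\mathcal{D}_2}\phi(n/d)$, then $\mathcal{D}_1=\mathcal{D}_2$.
   Context: $\phi$ is Euler's totient function. *)

theory Defs
  imports "HOL-Number_Theory.Number_Theory"
begin

end

theory Submission
  imports Defs
begin

text \<open>Call \<open>N\<close> good (\<open>totient_sum_injective N\<close>) if a set \<open>D\<close> of divisors of \<open>N\<close> is determined by
  \<open>\<Sum>d\<in>D. \<phi>(N/d)\<close>. Good numbers are built up one prime power at a time: if \<open>m\<close> is good,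
  \<open>q\<close> is a prime with \<open>m + 1 < q\<close> and \<open>m q\<^sup>J\<close> is good, then so is \<open>m q\<^sup>J\<^sup>+\<^sup>1\<close>.
  Indeed, splitting \<open>D\<close> according to divisibility by \<open>q\<close>, the sum becomes
  \<open>A + q\<^sup>J(q - 1) B\<close>, where \<open>A \<le> m q\<^sup>J < q\<^sup>J(q - 1)\<close> is the sum for the divisors of
  \<open>m q\<^sup>J\<close> obtained by cancelling \<open>q\<close>, and \<open>B\<close> is the sum for the divisors of \<open>m\<close> coprime
  to \<open>q\<close>. So \<open>A\<close> and \<open>B\<close> are the two digits of the sum in base \<open>q\<^sup>J(q - 1)\<close>.
  The growth condition, together with oddness, provides \<open>m + 1 < q\<close> at every stage; it also
  makes the primes distinct.\<close>

definition totient_sum_injective :: "nat \<Rightarrow> bool" where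
  "totient_sum_injective N \<longleftrightarrow> inj_on (\<lambda>D. \<Sum>d\<in>D. totient (N div d)) (Pow {d. d dvd N})"

lemma sum_totient_div_divisors:
  assumes "N > 0"
  shows "(\<Sum>d | d dvd N. totient (N div d)) = N"
proof -
  have "(\<Sum>d | d dvd N. totient (N div d)) = (\<Sum>d | d dvd N. totient d)"
    by (rule sum.reindex_bij_witness[of _ "\<lambda>d. N div d" "\<lambda>d. N div d"])
       (use assms in \<open>auto elim!: dvdE\<close>)
  thus ?thesis by (simp add: totient_divisor_sum)
qed

lemma sum_totient_div_le:
  assumes "N > 0" "D \<subseteq> {d. d dvd N}"
  shows "(\<Sum>d\<in>D. totient (N div d)) \<le> N"
proof -
  have "(\<Sum>d\<in>D. totient (N div d)) \<le> (\<Sum>d | d dvd N. totient (N div d))"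
    by (rule sum_mono2) (use assms in \<open>auto simp: finite_divisors_nat\<close>)
  thus ?thesis using sum_totient_div_divisors[OF assms(1)] by simp
qed

lemma add_mult_digits_unique:
  fixes a1 a2 b1 b2 K :: nat
  assumes "a1 + K * b1 = a2 + K * b2" "a1 < K" "a2 < K"
  shows "a1 = a2 \<and> b1 = b2"
proof -
  have "a1 = (a1 + K * b1) mod K" "a2 = (a2 + K * b2) mod K" using assms(2,3) by simp_all
  hence "a1 = a2" using assms(1) by simp
  thus ?thesis using assms by simp
qed

lemma totient_sum_injective_1: "totient_sum_injective 1"
  unfolding totient_sum_injective_def
proof (rule inj_onI)
  fix D1 D2 :: "nat set"
  assume "D1 \<in> Pow {d. d dvd 1}" "D2 \<in> Pow {d. d dvd 1}"
    and eq: "(\<Sum>d\<in>D1. totient (1 div d)) = (\<Sum>d\<in>D2. totient (1 div d))"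
  hence "D1 \<in> {{}, {1}}" "D2 \<in> {{}, {1}}" by auto
  thus "D1 = D2" using eq by auto
qed

context
  fixes q m :: nat
  assumes q: "prime q" and m: "m > 0" and q_not_dvd_m: "\<not> q dvd m"
begin

lemma divisor_coprime_dvd:
  assumes "d dvd m * q ^ Suc J" "\<not> q dvd d"
  shows "d dvd m"
proof -
  have "coprime d (q ^ Suc J)"
    using prime_imp_coprime[OF q assms(2)] by (simp add: coprime_commute)
  thus ?thesis using assms(1) coprime_dvd_mult_left_iff by blast
qed

lemma divisor_div_prime_dvd:
  assumes "d dvd m * q ^ Suc J" "q dvd d"
  shows "d div q dvd m * q ^ J"
  using assms q prime_gt_0_nat by (auto elim!: dvdE simp: ac_simps)

lemma totient_div_divisor_multiple:
  assumes "q dvd d"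
  shows "totient (m * q ^ Suc J div d) = totient (m * q ^ J div (d div q))"
proof -
  obtain k where "d = q * k" using assms by blast
  thus ?thesis using q prime_gt_0_nat by (simp add: ac_simps)
qed

lemma totient_div_divisor_coprime:
  assumes "d dvd m * q ^ Suc J" "\<not> q dvd d"
  shows "totient (m * q ^ Suc J div d) = q ^ J * (q - 1) * totient (m div d)"
proof -
  obtain k where k: "m = d * k" using divisor_coprime_dvd[OF assms] by blast
  hence "\<not> q dvd k" using q_not_dvd_m by auto
  hence coprime: "coprime k (q ^ Suc J)"
    using prime_imp_coprime[OF q] by (simp add: coprime_commute)
  have "d > 0" using k m by auto
  hence quotients: "m div d = k" "m * q ^ Suc J div d = k * q ^ Suc J"
    unfolding k by (simp_all add: mult.assoc)
  show ?thesis
    unfolding quotients totient_mult_coprime[OF coprime] totient_prime_power_Suc[OF q]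
    by (rule mult.commute)
qed

lemma sum_totient_div_split:
  assumes D: "D \<subseteq> {d. d dvd m * q ^ Suc J}"
  shows "(\<Sum>d\<in>D. totient (m * q ^ Suc J div d)) =
      (\<Sum>e\<in>(\<lambda>d. d div q) ` {d\<in>D. q dvd d}. totient (m * q ^ J div e))
      + q ^ J * (q - 1) * (\<Sum>d\<in>{d\<in>D. \<not> q dvd d}. totient (m div d))"
proof -
  have inj: "inj_on (\<lambda>d. d div q) {d\<in>D. q dvd d}"
    by (rule inj_onI) (auto elim!: dvdE)
  have "m * q ^ Suc J > 0" using m q prime_gt_0_nat by simp
  hence "finite D" using D finite_divisors_nat finite_subset by metis
  moreover have "D = {d\<in>D. q dvd d} \<union> {d\<in>D. \<not> q dvd d}" by blast
  ultimately have "(\<Sum>d\<in>D. totient (m * q ^ Suc J div d)) =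
      (\<Sum>d\<in>{d\<in>D. q dvd d}. totient (m * q ^ Suc J div d))
      + (\<Sum>d\<in>{d\<in>D. \<not> q dvd d}. totient (m * q ^ Suc J div d))"
    by (metis (no_types, lifting) sum.union_disjoint disjoint_iff finite_Un mem_Collect_eq)
  also have "(\<Sum>d\<in>{d\<in>D. q dvd d}. totient (m * q ^ Suc J div d))
      = (\<Sum>d\<in>{d\<in>D. q dvd d}. totient (m * q ^ J div (d div q)))"
    by (intro sum.cong refl totient_div_divisor_multiple) simp
  also have "\<dots> = (\<Sum>e\<in>(\<lambda>d. d div q) ` {d\<in>D. q dvd d}. totient (m * q ^ J div e))"
    by (simp only: sum.reindex[OF inj] comp_def)
  also have "(\<Sum>d\<in>{d\<in>D. \<not> q dvd d}. totient (m * q ^ Suc J div d))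
      = (\<Sum>d\<in>{d\<in>D. \<not> q dvd d}. q ^ J * (q - 1) * totient (m div d))"
    by (intro sum.cong refl totient_div_divisor_coprime) (use D in auto)
  finally show ?thesis by (simp add: sum_distrib_left)
qed

lemma totient_sum_injective_Suc_power:
  assumes m_lt: "m + 1 < q"
    and m_inj: "totient_sum_injective m" and mq_inj: "totient_sum_injective (m * q ^ J)"
  shows "totient_sum_injective (m * q ^ Suc J)"
  unfolding totient_sum_injective_def
proof (rule inj_onI)
  fix D1 D2
  assume D1: "D1 \<in> Pow {d. d dvd m * q ^ Suc J}" and D2: "D2 \<in> Pow {d. d dvd m * q ^ Suc J}"
    and eq: "(\<Sum>d\<in>D1. totient (m * q ^ Suc J div d)) = (\<Sum>d\<in>D2. totient (m * q ^ Suc J div d))"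
  let ?K = "q ^ J * (q - 1)"
  let ?hi = "\<lambda>D. (\<lambda>d. d div q) ` {d\<in>D. q dvd d}" and ?lo = "\<lambda>D. {d\<in>D. \<not> q dvd d}"
  let ?A = "\<lambda>D. \<Sum>e\<in>?hi D. totient (m * q ^ J div e)"
  let ?B = "\<lambda>D. \<Sum>d\<in>?lo D. totient (m div d)"
  have hi: "?hi D \<in> Pow {e. e dvd m * q ^ J}" and lo: "?lo D \<in> Pow {d. d dvd m}"
    if "D \<in> Pow {d. d dvd m * q ^ Suc J}" for D
    using that divisor_div_prime_dvd divisor_coprime_dvd by blast+
  have "m < q - 1" "q ^ J > 0" using m_lt q prime_gt_0_nat by simp_all
  hence "m * q ^ J < ?K" by simp
  hence A_lt: "?A D < ?K" if "D \<in> Pow {d. d dvd m * q ^ Suc J}" for D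
    using sum_totient_div_le[OF _ PowD[OF hi[OF that]]] m q prime_gt_0_nat
    by (simp add: le_less_trans)
  have "?A D1 + ?K * ?B D1 = ?A D2 + ?K * ?B D2"
    using eq unfolding sum_totient_div_split[OF PowD[OF D1]] sum_totient_div_split[OF PowD[OF D2]] .
  hence A_eq: "?A D1 = ?A D2" and B_eq: "?B D1 = ?B D2"
    using add_mult_digits_unique A_lt[OF D1] A_lt[OF D2] by blast+
  have hi_eq: "?hi D1 = ?hi D2"
    by (rule inj_onD[OF mq_inj[unfolded totient_sum_injective_def] A_eq hi[OF D1] hi[OF D2]])
  have lo_eq: "?lo D1 = ?lo D2"
    by (rule inj_onD[OF m_inj[unfolded totient_sum_injective_def] B_eq lo[OF D1] lo[OF D2]])
  have multiples: "{d\<in>D. q dvd d} = (\<lambda>e. q * e) ` ?hi D" for D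
    by (auto simp: image_image elim!: dvdE)
  have "{d\<in>D1. q dvd d} = {d\<in>D2. q dvd d}"
    using multiples[of D1] multiples[of D2] hi_eq by metis
  thus "D1 = D2" using lo_eq by blast
qed

lemma totient_sum_injective_mult_power:
  assumes "m + 1 < q" "totient_sum_injective m"
  shows "totient_sum_injective (m * q ^ k)"
proof (induction k)
  case 0
  show ?case using assms(2) by simp
next
  case (Suc k)
  then show ?case using totient_sum_injective_Suc_power[OF assms] by blast
qed

end

lemma totient_sum_injective_odd_prime_power_mult:
  assumes "prime q" "odd q" "odd m" "m < q" "totient_sum_injective m"
  shows "totient_sum_injective (m * q ^ k)"
proof -
  have "m > 0" "m + 1 < q" using assms(2-4) by presburger+
  moreover have "\<not> q dvd m" using \<open>m > 0\<close> assms(4) by (meson dvd_imp_le not_le)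
  ultimately show ?thesis using totient_sum_injective_mult_power assms(1,5) by blast
qed

theorem lemma3p4:
  fixes n s :: nat and p J :: "nat \<Rightarrow> nat" and D1 D2 :: "nat set"
  assumes "odd n"
    and "s \<ge> 2"
    and "\<And>i. i < s \<Longrightarrow> prime (p i)"
    and "inj_on p {..<s}"
    and "\<And>i. i < s \<Longrightarrow> J i \<ge> 1"
    and "n = (\<Prod>i<s. p i ^ J i)"
    and "\<And>r. 1 \<le> r \<Longrightarrow> r \<le> s - 1 \<Longrightarrow> (\<Prod>i<r. p i ^ J i) < p r"
    and "D1 \<subseteq> {d. d > 0 \<and> d dvd n}"
    and "D2 \<subseteq> {d. d > 0 \<and> d dvd n}"
    and "(\<Sum>d\<in>D1. totient (n div d)) = (\<Sum>d\<in>D2. totient (n div d))"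
  shows "D1 = D2"
proof -
  define N where "N r = (\<Prod>i<r. p i ^ J i)" for r
  have N_dvd: "N r dvd n" if "r \<le> s" for r
    unfolding N_def assms(6) using that by (intro prod_dvd_prod_subset) auto
  have "totient_sum_injective (N r)" if "r \<le> s" for r
    using that
  proof (induction r)
    case 0
    show ?case using totient_sum_injective_1 by (simp add: N_def)
  next
    case (Suc r)
    hence r: "r < s" by simp
    have prime: "prime (p r)" using assms(3) r by simp
    have "p r dvd N (Suc r)" using assms(5)[OF r] by (simp add: N_def)
    hence "odd (p r)" "odd (N r)"
      using N_dvd[OF Suc.prems] N_dvd[of r] r assms(1) dvd_trans by (metis less_imp_le)+
    moreover have "N r < p r"
      using assms(7)[of r] r prime_gt_1_nat[OF prime] by (cases "r = 0") (simp_all add: N_def)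
    ultimately have "totient_sum_injective (N r * p r ^ J r)"
      using totient_sum_injective_odd_prime_power_mult[OF prime] Suc.IH r by simp
    thus ?case by (simp add: N_def)
  qed
  hence "totient_sum_injective n" using assms(6) by (simp add: N_def)
  thus ?thesis
    unfolding totient_sum_injective_def by (rule inj_onD) (use assms(8-10) in auto)
qed

end
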